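(* If $\mathfrak R$ is the Sierpiński gasket iterated graph system, then for all $m\in\mathbb N$ and $i,j\in\{0,1,2\}$, \[ d_{G_m}(i^m,j^m)\le 2^m-1. \] If $\mathfrak R$ is the pentagonal Sierpiński carpet iterated graph system, then for all $m\in\mathbb N$ and $i,j\in\{0,1,2,3,4\}$, \[ d_{G_m}(i^m,j^m)\le 2^{m+1}-1. \] Here $i^m\in W_m$ denotes the word consisting of the symbol $i$ repeated $m$ times.
   Context: Graphs: $(V,E)$, $V$ finite non-empty, $E\subseteq V\times V$, $(x,y)\in E\Rightarrow(y,x)\notin E$; $d_G$ is the shortest-path metric in the underlying undirected graph. An iterated graph system consists of a connected graph $G_1=(S,E)$, a finite set $\mathcal T$ of types, a surjective typing $\mathfrak t:E\to\mathcal T$ and non-empty gluing rules $I_t\subseteq S\times S$. With $W_m=S^m$, $[w]_k=w_1\cdots w_k$, the replacement graphs $G_m=(W_m,E_m)$ are defined recursively: $(w,v)\in E_{m+1}$ iff either (1) $[w]_m=[v]_m$ and $(w_{m+1},v_{m+1})\in E$ (type $\mathfrak t(w_{m+1},v_{m+1})$), or (2) $([w]_m,[v]_m)\in E_m$ and $(w_{m+1},v_{m+1})\in I_{\mathfrak t([w]_m,[v]_m)}$ (type $\mathfrak t([w]_m,[v]_m)$). Sierpiński gasket: $S=\{0,1,2\}$, $E=\{(0,1),(1,2),(0,2)\}$ of types $a,b,c$ respectively, $I_a=\{(1,0)\}$, $I_b=\{(2,1)\}$, $I_c=\{(2,0)\}$. Pentagonal Sierpiński carpet: $S=\{0,1,2,3,4\}$,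 $E=\{(0,1),(1,2),(2,3),(3,4),(4,0)\}$ of types $a,b,c,d,e$ respectively, $I_a=\{(1,0),(2,4)\}$, $I_b=\{(2,1),(3,0)\}$, $I_c=\{(3,2),(4,1)\}$, $I_d=\{(4,3),(0,2)\}$, $I_e=\{(0,4),(1,3)\}$. *)

theory Defs
  imports Main "HOL-Library.Extended_Nat"
begin

text \<open>Iterated graph system given by: alphabet S, edge set E of G_1 = (S,E),
  typing ty (only relevant on E), gluing rules I t for each type t.
  Words in W_m = S^m are lists of length m over S.
  igs_edges ... m is the set of typed edges ((w,v),type) of G_m (m >= 1).\<close>

fun igs_edges ::
  "'s set \<Rightarrow> ('s \<times> 's) set \<Rightarrow> ('s \<times> 's \<Rightarrow> 't) \<Rightarrow> ('t \<Rightarrow> ('s \<times> 's) set) \<Rightarrow> nat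
   \<Rightarrow> (('s list \<times> 's list) \<times> 't) set" where
  "igs_edges S E ty I 0 = {}"
| "igs_edges S E ty I (Suc 0) = {(([x], [y]), ty (x, y)) | x y. (x, y) \<in> E}"
| "igs_edges S E ty I (Suc (Suc m)) =
     {((u @ [x], u @ [y]), ty (x, y)) | u x y.
         length u = Suc m \<and> set u \<subseteq> S \<and> (x, y) \<in> E}
   \<union> {((u @ [x], v @ [y]), t) | u v x y t.
         ((u, v), t) \<in> igs_edges S E ty I (Suc m) \<and> (x, y) \<in> I t}"

definition igs_adj ::
  "'s set \<Rightarrow> ('s \<times> 's) set \<Rightarrow> ('s \<times> 's \<Rightarrow> 't) \<Rightarrow> ('t \<Rightarrow> ('s \<times> 's) set) \<Rightarrow> nat
   \<Rightarrow> ('s list \<times> 's list) set" where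
  "igs_adj S E ty I m =
     {(w, v). \<exists>t. ((w, v), t) \<in> igs_edges S E ty I m \<or> ((v, w), t) \<in> igs_edges S E ty I m}"

text \<open>Shortest-path distance d_{G_m} in the underlying undirected graph
  (infinity if not connected): least number of steps of a walk.\<close>
definition igs_dist ::
  "'s set \<Rightarrow> ('s \<times> 's) set \<Rightarrow> ('s \<times> 's \<Rightarrow> 't) \<Rightarrow> ('t \<Rightarrow> ('s \<times> 's) set) \<Rightarrow> nat
   \<Rightarrow> 's list \<Rightarrow> 's list \<Rightarrow> enat" where
  "igs_dist S E ty I m w v =
     (INF n \<in> {n. (w, v) \<in> (igs_adj S E ty I m) ^^ n}. enat n)"

section \<open>Sierpinski gasket: types a,b,c encoded as 0,1,2\<close>

definition SG_S :: "nat set" where "SG_S = {0, 1, 2}"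
definition SG_E :: "(nat \<times> nat) set" where "SG_E = {(0, 1), (1, 2), (0, 2)}"
definition SG_ty :: "nat \<times> nat \<Rightarrow> nat" where
  "SG_ty e = (if e = (0, 1) then 0 else if e = (1, 2) then 1 else 2)"
definition SG_I :: "nat \<Rightarrow> (nat \<times> nat) set" where
  "SG_I t = (if t = 0 then {(1, 0)} else if t = 1 then {(2, 1)} else {(2, 0)})"

section \<open>Pentagonal Sierpinski carpet: types a,b,c,d,e encoded as 0..4\<close>

definition PC_S :: "nat set" where "PC_S = {0, 1, 2, 3, 4}"
definition PC_E :: "(nat \<times> nat) set" where
  "PC_E = {(0, 1), (1, 2), (2, 3), (3, 4), (4, 0)}"
definition PC_ty :: "nat \<times> nat \<Rightarrow> nat" where
  "PC_ty e = fst e"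
definition PC_I :: "nat \<Rightarrow> (nat \<times> nat) set" where
  "PC_I t = (if t = 0 then {(1, 0), (2, 4)}
        else if t = 1 then {(2, 1), (3, 0)}
        else if t = 2 then {(3, 2), (4, 1)}
        else if t = 3 then {(4, 3), (0, 2)}
        else {(0, 4), (1, 3)})"

end

theory Submission
  imports Defs
begin

text \<open>Write i^(m+1) = i i^m. If (i, j) is an edge of G_1 and the gluing rule of its type
  contains (j, i), then inside the copy of G_m prefixed by i one walks from i i^m to i j^m in
  2^m - 1 steps, the gluing makes i j^m adjacent to j i^m, and inside the copy prefixed by j one
  walks on to j j^m; hence d(i^(m+1), j^(m+1)) \<le> 2 (2^m - 1) + 1 = 2^(m+1) - 1.
  Concatenating along a walk of length l in G_1 bounds d(i^m, j^m) by l (2^m - 1). Both systems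
  have this gluing property, and G_1 has diameter 1 for the gasket and 2 for the pentagon.\<close>

lemma sym_relpow:
  assumes "sym r"
  shows "sym (r ^^ n)"
proof (induction n)
  case 0
  show ?case by (simp add: sym_Id)
next
  case (Suc n)
  show ?case
    unfolding sym_def
  proof (intro allI impI)
    fix x z assume "(x, z) \<in> r ^^ Suc n"
    then obtain y where "(x, y) \<in> r ^^ n" "(y, z) \<in> r" by (rule relpow_Suc_E)
    with assms Suc.IH have "(z, y) \<in> r" "(y, x) \<in> r ^^ n" by (auto dest: symD)
    then show "(z, x) \<in> r ^^ Suc n" by (rule relpow_Suc_I2)
  qed
qed

lemma igs_edges_copyI:
  "length u = Suc m \<Longrightarrow> set u \<subseteq> S \<Longrightarrow> (x, y) \<in> E \<Longrightarrow>
    ((u @ [x], u @ [y]), ty (x, y)) \<in> igs_edges S E ty I (Suc (Suc m))"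
  by auto

lemma igs_edges_glueI:
  "((u, v), t) \<in> igs_edges S E ty I (Suc m) \<Longrightarrow> (x, y) \<in> I t \<Longrightarrow>
    ((u @ [x], v @ [y]), t) \<in> igs_edges S E ty I (Suc (Suc m))"
  by (simp only: igs_edges.simps(3)) blast

lemma igs_edges_Suc_SucE:
  assumes "((w, v), t) \<in> igs_edges S E ty I (Suc (Suc m))"
  obtains (copy) u x y where "w = u @ [x]" "v = u @ [y]" "t = ty (x, y)"
      "length u = Suc m" "set u \<subseteq> S" "(x, y) \<in> E"
    | (glue) u u' x y where "w = u @ [x]" "v = u' @ [y]"
      "((u, u'), t) \<in> igs_edges S E ty I (Suc m)" "(x, y) \<in> I t"
  using assms by (simp only: igs_edges.simps(3)) blast

lemma igs_edges_Cons:
  assumes "((w, v), t) \<in> igs_edges S E ty I n" "a \<in> S"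
  shows "((a # w, a # v), t) \<in> igs_edges S E ty I (Suc n)"
  using assms(1)
proof (induction n arbitrary: w v t rule: less_induct)
  case (less n)
  consider (one) "n = Suc 0" | (more) m where "n = Suc (Suc m)"
    using less.prems by (metis igs_edges.simps(1) empty_iff not0_implies_Suc)
  then show ?case
  proof cases
    case one
    with less.prems assms(2) show ?thesis by auto
  next
    case more
    from less.prems[unfolded more] show ?thesis
      unfolding more
    proof (cases rule: igs_edges_Suc_SucE)
      case (copy u x y)
      then show "((a # w, a # v), t) \<in> igs_edges S E ty I (Suc (Suc (Suc m)))"
        using igs_edges_copyI[of "a # u" "Suc m" S x y E ty I] assms(2)
        by (simp del: igs_edges.simps)
    next
      case (glue u u' x y)
      with less.IH[of "Suc m"] more have "((a # u, a # u'), t) \<in> igs_edges S E ty I (Suc (Suc m))"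
        by blast
      then have "(((a # u) @ [x], (a # u') @ [y]), t) \<in> igs_edges S E ty I (Suc (Suc (Suc m)))"
        using glue(4) by (rule igs_edges_glueI)
      then show "((a # w, a # v), t) \<in> igs_edges S E ty I (Suc (Suc (Suc m)))"
        using glue(1,2) by (simp del: igs_edges.simps)
    qed
  qed
qed

lemma igs_adj_Cons:
  assumes "(w, v) \<in> igs_adj S E ty I n" "a \<in> S"
  shows "(a # w, a # v) \<in> igs_adj S E ty I (Suc n)"
proof -
  from assms(1) obtain t where "((w, v), t) \<in> igs_edges S E ty I n \<or> ((v, w), t) \<in> igs_edges S E ty I n"
    unfolding igs_adj_def by blast
  with assms(2) show ?thesis
    unfolding igs_adj_def by (blast dest: igs_edges_Cons)
qed

lemma relpow_igs_adj_Cons: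
  assumes "(w, v) \<in> igs_adj S E ty I n ^^ k" "a \<in> S"
  shows "(a # w, a # v) \<in> igs_adj S E ty I (Suc n) ^^ k"
  using assms(1)
proof (induction k arbitrary: v)
  case 0
  then show ?case by simp
next
  case (Suc k)
  then obtain u where "(w, u) \<in> igs_adj S E ty I n ^^ k" "(u, v) \<in> igs_adj S E ty I n"
    by (blast elim: relpow_Suc_E)
  with Suc.IH assms(2) show ?case
    by (blast intro: relpow_Suc_I igs_adj_Cons)
qed

lemma sym_igs_adj: "sym (igs_adj S E ty I n)"
  unfolding igs_adj_def sym_def by blast

lemma igs_edges_Cons_replicate:
  assumes "(i, j) \<in> E" "(j, i) \<in> I (ty (i, j))"
  shows "((i # replicate n j, j # replicate n i), ty (i, j)) \<in> igs_edges S E ty I (Suc n)"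
proof (induction n)
  case 0
  with assms(1) show ?case by auto
next
  case (Suc n)
  then have "(((i # replicate n j) @ [j], (j # replicate n i) @ [i]), ty (i, j))
      \<in> igs_edges S E ty I (Suc (Suc n))"
    using assms(2) by (rule igs_edges_glueI)
  then show ?case by (simp add: replicate_append_same)
qed

lemma relpow_igs_adj_replicate:
  assumes "(i, j) \<in> E" "i \<in> S" "j \<in> S" "(j, i) \<in> I (ty (i, j))"
  shows "(replicate n i, replicate n j) \<in> igs_adj S E ty I n ^^ (2 ^ n - 1)"
proof (induction n)
  case 0
  then show ?case by simp
next
  case (Suc n)
  let ?G = "igs_adj S E ty I (Suc n)"
  have "(i # replicate n i, i # replicate n j) \<in> ?G ^^ (2 ^ n - 1)"
    using Suc.IH assms(2) by (rule relpow_igs_adj_Cons)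
  moreover have "(i # replicate n j, j # replicate n i) \<in> ?G ^^ 1"
    using igs_edges_Cons_replicate[where ty = ty and I = I, OF assms(1,4)]
    unfolding igs_adj_def by auto
  moreover have "(j # replicate n i, j # replicate n j) \<in> ?G ^^ (2 ^ n - 1)"
    using Suc.IH assms(3) by (rule relpow_igs_adj_Cons)
  ultimately have "(i # replicate n i, j # replicate n j) \<in> ?G ^^ ((2 ^ n - 1) + 1 + (2 ^ n - 1))"
    by (meson relpow_trans)
  moreover have "(2::nat) ^ n - 1 + 1 + (2 ^ n - 1) = 2 ^ Suc n - 1"
    by (simp add: Suc_leI)
  ultimately show ?case by simp
qed

definition igs_corner_gluing ::
  "'s set \<Rightarrow> ('s \<times> 's) set \<Rightarrow> ('s \<times> 's \<Rightarrow> 't) \<Rightarrow> ('t \<Rightarrow> ('s \<times> 's) set) \<Rightarrow> bool" where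
  "igs_corner_gluing S E ty I \<longleftrightarrow> (\<forall>(x, y) \<in> E. x \<in> S \<and> y \<in> S \<and> (y, x) \<in> I (ty (x, y)))"

lemma relpow_igs_adj_replicate_walk:
  assumes gluing: "igs_corner_gluing S E ty I"
    and walk: "(i, j) \<in> (E \<union> E\<inverse>) ^^ l"
  shows "(replicate n i, replicate n j) \<in> igs_adj S E ty I n ^^ (l * (2 ^ n - 1))"
  using walk
proof (induction l arbitrary: j)
  case 0
  then show ?case by simp
next
  case (Suc l)
  then obtain k where "(i, k) \<in> (E \<union> E\<inverse>) ^^ l" and kj: "(k, j) \<in> E \<union> E\<inverse>"
    by (blast elim: relpow_Suc_E)
  with Suc.IH have ik: "(replicate n i, replicate n k) \<in> igs_adj S E ty I n ^^ (l * (2 ^ n - 1))"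
    by blast
  have "(replicate n k, replicate n j) \<in> igs_adj S E ty I n ^^ (2 ^ n - 1)"
    using kj
  proof
    assume "(k, j) \<in> E"
    with gluing show ?thesis
      unfolding igs_corner_gluing_def by (blast intro: relpow_igs_adj_replicate)
  next
    assume "(k, j) \<in> E\<inverse>"
    with gluing have "(replicate n j, replicate n k) \<in> igs_adj S E ty I n ^^ (2 ^ n - 1)"
      unfolding igs_corner_gluing_def by (blast intro: relpow_igs_adj_replicate)
    then show ?thesis using sym_relpow[OF sym_igs_adj] by (blast dest: symD)
  qed
  with ik have "(replicate n i, replicate n j) \<in> igs_adj S E ty I n ^^ (l * (2 ^ n - 1) + (2 ^ n - 1))"
    by (rule relpow_trans)
  then show ?case by (simp add: add.commute)
qed

lemma igs_dist_le_relpow: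
  assumes "(w, v) \<in> igs_adj S E ty I n ^^ k"
  shows "igs_dist S E ty I n w v \<le> enat k"
  unfolding igs_dist_def using assms by (simp add: INF_lower)

lemma igs_dist_replicate_le:
  assumes "igs_corner_gluing S E ty I"
    and "(i, j) \<in> (E \<union> E\<inverse>) ^^ l"
  shows "igs_dist S E ty I n (replicate n i) (replicate n j) \<le> enat (l * (2 ^ n - 1))"
  using relpow_igs_adj_replicate_walk[where ty = ty and I = I, OF assms] by (rule igs_dist_le_relpow)

lemma SG_corner_gluing: "igs_corner_gluing SG_S SG_E SG_ty SG_I"
  by (auto simp: igs_corner_gluing_def SG_E_def SG_S_def SG_I_def SG_ty_def)

lemma PC_corner_gluing: "igs_corner_gluing PC_S PC_E PC_ty PC_I"
  by (auto simp: igs_corner_gluing_def PC_E_def PC_S_def PC_I_def PC_ty_def)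

lemma SG_S_walk:
  assumes "i \<in> SG_S" "j \<in> SG_S"
  obtains l where "l \<le> 1" "(i, j) \<in> (SG_E \<union> SG_E\<inverse>) ^^ l"
proof (cases "i = j")
  case True
  then show ?thesis using that[of 0] by simp
next
  case False
  with assms have "(i, j) \<in> (SG_E \<union> SG_E\<inverse>) ^^ 1"
    by (auto simp: SG_S_def SG_E_def)
  then show ?thesis using that by blast
qed

lemma PC_S_walk:
  assumes "i \<in> PC_S" "j \<in> PC_S"
  obtains l where "l \<le> 2" "(i, j) \<in> (PC_E \<union> PC_E\<inverse>) ^^ l"
proof -
  let ?R = "PC_E \<union> PC_E\<inverse>"
  have "i = j \<or> (i, j) \<in> ?R \<or> (\<exists>k \<in> PC_S. (i, k) \<in> ?R \<and> (k, j) \<in> ?R)"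
    using assms unfolding PC_S_def by (elim insertE emptyE) (simp_all add: PC_E_def)
  then show ?thesis
  proof (elim disjE bexE conjE)
    assume "i = j"
    then show ?thesis using that[of 0] by simp
  next
    assume "(i, j) \<in> ?R"
    then show ?thesis using that[of 1] by simp
  next
    fix k assume "(i, k) \<in> ?R" "(k, j) \<in> ?R"
    then have "(i, j) \<in> ?R ^^ 2"
      unfolding numeral_2_eq_2 by (blast intro: relpow_Suc_I relpow_0_I)
    then show ?thesis by (rule that[OF order_refl])
  qed
qed

theorem lemma5p18:
  shows "(\<forall>m \<ge> 1. \<forall>i \<in> SG_S. \<forall>j \<in> SG_S.
            igs_dist SG_S SG_E SG_ty SG_I m (replicate m i) (replicate m j)
              \<le> enat (2 ^ m - 1))
       \<and> (\<forall>m \<ge> 1. \<forall>i \<in> PC_S. \<forall>j \<in> PC_S.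
            igs_dist PC_S PC_E PC_ty PC_I m (replicate m i) (replicate m j)
              \<le> enat (2 ^ (m + 1) - 1))"
proof (intro conjI allI impI ballI)
  fix m i j :: nat
  assume "i \<in> SG_S" "j \<in> SG_S"
  then obtain l where "l \<le> 1" and walk: "(i, j) \<in> (SG_E \<union> SG_E\<inverse>) ^^ l"
    by (rule SG_S_walk)
  from walk have "igs_dist SG_S SG_E SG_ty SG_I m (replicate m i) (replicate m j)
      \<le> enat (l * (2 ^ m - 1))"
    by (rule igs_dist_replicate_le[OF SG_corner_gluing])
  also have "\<dots> \<le> enat (2 ^ m - 1)"
    using \<open>l \<le> 1\<close> by simp
  finally show "igs_dist SG_S SG_E SG_ty SG_I m (replicate m i) (replicate m j) \<le> enat (2 ^ m - 1)" .
next
  fix m i j :: nat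
  assume "i \<in> PC_S" "j \<in> PC_S"
  then obtain l where "l \<le> 2" and walk: "(i, j) \<in> (PC_E \<union> PC_E\<inverse>) ^^ l"
    by (rule PC_S_walk)
  from walk have "igs_dist PC_S PC_E PC_ty PC_I m (replicate m i) (replicate m j)
      \<le> enat (l * (2 ^ m - 1))"
    by (rule igs_dist_replicate_le[OF PC_corner_gluing])
  also have "\<dots> \<le> enat (2 ^ (m + 1) - 1)"
    using mult_right_mono[OF \<open>l \<le> 2\<close>, of "2 ^ m - 1"] by (simp add: right_diff_distrib')
  finally show "igs_dist PC_S PC_E PC_ty PC_I m (replicate m i) (replicate m j) \<le> enat (2 ^ (m + 1) - 1)" .
qed

end
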